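(* Let $(\mathbb S,+,\cdot)$ be an S-Ring. Then $\Lambda=\mathbb S_0$, and consequently $(\mathbb S,+,\cdot)$ is Complete Regular.
   Context: An S-Structure is a triple $(\mathbb S,+,\cdot)$ where $\mathbb S$ is a set and $+,\cdot$ are binary operations on $\mathbb S$ such that: $(\mathbb S,+)$ is a commutative group with identity $0$ (the inverse of $s$ is written $-s$, and $s-t:=s+(-t)$); $\mathbb S$ is closed under $\cdot$; and there exists $s\in\mathbb S$ with $0\cdot s\neq 0$ or $s\cdot 0\neq 0$. Multiplication binds tighter than addition. The structures considered come with a distinguished element of $\mathbb S$ denoted $1$. It is Commutative if $s\cdot t=t\cdot s$ for all $s,t$. For a Commutative S-Structure and $\alpha\in\mathbb S$, put $\mathbb S_\alpha=\{s\in\mathbb S:0\cdot s=s\cdot 0=\alpha\}$ and $\Lambda=\{\alpha\in\mathbb S:\mathbb S_\alpha\neq\emptyset\}$. Wheel Distributive: $s\cdot(t+r)+(s\cdot 0)=(s\cdot t)+(s\cdot r)$ for all $s,t,r\in\mathbb S$. S-Associative: for all $m,n\in\mathbb S_0$ and $s\in\mathbb S$, $m\cdot(n\cdot s)=(m\cdot n)\cdot s-([(m-1)\cdot(n-1)]\cdot(0\cdot s))$. Base: if $\mathbb S_0\neq\emptyset$ and $\alpha\in\Lambda$, $q\in\mathbb S_\alpha$ is a Base for $\mathbb S_\alpha$ if $q+\beta\in\mathbb S_\alpha$ for all $\beta\in\mathbb S_0$ and every $s\in\mathbb S_\alpha$ equals $q+\beta$ for some $\beta\in\mathbb S_0$.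 Coordinated: $\mathbb S_0\neq\emptyset$ and every $\mathbb S_\alpha$ with $\alpha\in\Lambda$ has a Base. Standard Bases: a Coordinated Commutative S-Structure has Standard Bases if there is a specified element $q_0(1)\in\mathbb S_1$ which is a Base for $\mathbb S_1$, and for every $\alpha\in\Lambda$ the element $q_0(\alpha):=\alpha\cdot(q_0(1)+1)-1$ lies in $\mathbb S_\alpha$ and is a Base for $\mathbb S_\alpha$. An Essential S-Structure is an S-Structure that is Commutative, Wheel Distributive, S-Associative, has Standard Bases (in particular is Coordinated), satisfies $0,1\in\mathbb S_0$, and satisfies $\mathbb S_0=\{1\cdot x:x\in\mathbb S_0\}$. A Unity is an element $e\in\Lambda$ with $e\cdot s=s\cdot e=s$ for all $s\in\mathbb S$. An S-Ring is an Essential S-Structure which has a Unity. A Commutative S-Structure is Regular if $0\cdot s\in\mathbb S_0$ for every $s\in\mathbb S$, and Complete Regular if it is Regular and for every $\alpha\in\mathbb S_0$ there exists $s\in\mathbb S$ with $0\cdot s=\alpha$. *)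

theory Defs
  imports Main
begin

definition sneg :: "'a set \<Rightarrow> ('a \<Rightarrow> 'a \<Rightarrow> 'a) \<Rightarrow> 'a \<Rightarrow> 'a \<Rightarrow> 'a" where
  "sneg S add zero s = (THE t. t \<in> S \<and> add s t = zero)"

definition ssub :: "'a set \<Rightarrow> ('a \<Rightarrow> 'a \<Rightarrow> 'a) \<Rightarrow> 'a \<Rightarrow> 'a \<Rightarrow> 'a \<Rightarrow> 'a" where
  "ssub S add zero s t = add s (sneg S add zero t)"

definition s_structure ::
  "'a set \<Rightarrow> ('a \<Rightarrow> 'a \<Rightarrow> 'a) \<Rightarrow> ('a \<Rightarrow> 'a \<Rightarrow> 'a) \<Rightarrow> 'a \<Rightarrow> 'a \<Rightarrow> bool" where
  "s_structure S add mul zero one \<longleftrightarrow>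
     (\<forall>s\<in>S. \<forall>t\<in>S. add s t \<in> S) \<and>
     (\<forall>s\<in>S. \<forall>t\<in>S. \<forall>r\<in>S. add (add s t) r = add s (add t r)) \<and>
     (\<forall>s\<in>S. \<forall>t\<in>S. add s t = add t s) \<and>
     zero \<in> S \<and> (\<forall>s\<in>S. add zero s = s \<and> add s zero = s) \<and>
     (\<forall>s\<in>S. \<exists>t\<in>S. add s t = zero) \<and>
     (\<forall>s\<in>S. \<forall>t\<in>S. mul s t \<in> S) \<and>
     (\<exists>s\<in>S. mul zero s \<noteq> zero \<or> mul s zero \<noteq> zero) \<and>
     one \<in> S"

definition s_commutative :: "'a set \<Rightarrow> ('a \<Rightarrow> 'a \<Rightarrow> 'a) \<Rightarrow> bool" where
  "s_commutative S mul \<longleftrightarrow> (\<forall>s\<in>S. \<forall>t\<in>S. mul s t = mul t s)"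

definition S_sub :: "'a set \<Rightarrow> ('a \<Rightarrow> 'a \<Rightarrow> 'a) \<Rightarrow> 'a \<Rightarrow> 'a \<Rightarrow> 'a set" where
  "S_sub S mul zero \<alpha> = {s \<in> S. mul zero s = \<alpha> \<and> mul s zero = \<alpha>}"

definition Lambda :: "'a set \<Rightarrow> ('a \<Rightarrow> 'a \<Rightarrow> 'a) \<Rightarrow> 'a \<Rightarrow> 'a set" where
  "Lambda S mul zero = {\<alpha> \<in> S. S_sub S mul zero \<alpha> \<noteq> {}}"

definition wheel_distributive ::
  "'a set \<Rightarrow> ('a \<Rightarrow> 'a \<Rightarrow> 'a) \<Rightarrow> ('a \<Rightarrow> 'a \<Rightarrow> 'a) \<Rightarrow> 'a \<Rightarrow> bool" where
  "wheel_distributive S add mul zero \<longleftrightarrow>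
     (\<forall>s\<in>S. \<forall>t\<in>S. \<forall>r\<in>S. add (mul s (add t r)) (mul s zero) = add (mul s t) (mul s r))"

definition s_associative ::
  "'a set \<Rightarrow> ('a \<Rightarrow> 'a \<Rightarrow> 'a) \<Rightarrow> ('a \<Rightarrow> 'a \<Rightarrow> 'a) \<Rightarrow> 'a \<Rightarrow> 'a \<Rightarrow> bool" where
  "s_associative S add mul zero one \<longleftrightarrow>
     (\<forall>m\<in>S_sub S mul zero zero. \<forall>n\<in>S_sub S mul zero zero. \<forall>s\<in>S.
        mul m (mul n s) =
        ssub S add zero (mul (mul m n) s)
          (mul (mul (ssub S add zero m one) (ssub S add zero n one)) (mul zero s)))"

definition is_base ::
  "'a set \<Rightarrow> ('a \<Rightarrow> 'a \<Rightarrow> 'a) \<Rightarrow> ('a \<Rightarrow> 'a \<Rightarrow> 'a) \<Rightarrow> 'a \<Rightarrow> 'a \<Rightarrow> 'a \<Rightarrow> bool" where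
  "is_base S add mul zero \<alpha> q \<longleftrightarrow>
     q \<in> S_sub S mul zero \<alpha> \<and>
     (\<forall>\<beta>\<in>S_sub S mul zero zero. add q \<beta> \<in> S_sub S mul zero \<alpha>) \<and>
     (\<forall>s\<in>S_sub S mul zero \<alpha>. \<exists>\<beta>\<in>S_sub S mul zero zero. s = add q \<beta>)"

definition coordinated ::
  "'a set \<Rightarrow> ('a \<Rightarrow> 'a \<Rightarrow> 'a) \<Rightarrow> ('a \<Rightarrow> 'a \<Rightarrow> 'a) \<Rightarrow> 'a \<Rightarrow> bool" where
  "coordinated S add mul zero \<longleftrightarrow>
     S_sub S mul zero zero \<noteq> {} \<and>
     (\<forall>\<alpha>\<in>Lambda S mul zero. \<exists>q. is_base S add mul zero \<alpha> q)"

definition standard_bases ::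
  "'a set \<Rightarrow> ('a \<Rightarrow> 'a \<Rightarrow> 'a) \<Rightarrow> ('a \<Rightarrow> 'a \<Rightarrow> 'a) \<Rightarrow> 'a \<Rightarrow> 'a \<Rightarrow> bool" where
  "standard_bases S add mul zero one \<longleftrightarrow>
     coordinated S add mul zero \<and> s_commutative S mul \<and>
     (\<exists>q1. is_base S add mul zero one q1 \<and>
        (\<forall>\<alpha>\<in>Lambda S mul zero.
           is_base S add mul zero \<alpha> (ssub S add zero (mul \<alpha> (add q1 one)) one)))"

definition essential ::
  "'a set \<Rightarrow> ('a \<Rightarrow> 'a \<Rightarrow> 'a) \<Rightarrow> ('a \<Rightarrow> 'a \<Rightarrow> 'a) \<Rightarrow> 'a \<Rightarrow> 'a \<Rightarrow> bool" where
  "essential S add mul zero one \<longleftrightarrow>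
     s_structure S add mul zero one \<and>
     s_commutative S mul \<and>
     wheel_distributive S add mul zero \<and>
     s_associative S add mul zero one \<and>
     standard_bases S add mul zero one \<and>
     zero \<in> S_sub S mul zero zero \<and> one \<in> S_sub S mul zero zero \<and>
     S_sub S mul zero zero = {mul one x | x. x \<in> S_sub S mul zero zero}"

definition is_unity :: "'a set \<Rightarrow> ('a \<Rightarrow> 'a \<Rightarrow> 'a) \<Rightarrow> 'a \<Rightarrow> 'a \<Rightarrow> bool" where
  "is_unity S mul zero e \<longleftrightarrow>
     e \<in> Lambda S mul zero \<and> (\<forall>s\<in>S. mul e s = s \<and> mul s e = s)"

definition s_ring ::
  "'a set \<Rightarrow> ('a \<Rightarrow> 'a \<Rightarrow> 'a) \<Rightarrow> ('a \<Rightarrow> 'a \<Rightarrow> 'a) \<Rightarrow> 'a \<Rightarrow> 'a \<Rightarrow> bool" where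
  "s_ring S add mul zero one \<longleftrightarrow>
     essential S add mul zero one \<and> (\<exists>e. is_unity S mul zero e)"

definition regular :: "'a set \<Rightarrow> ('a \<Rightarrow> 'a \<Rightarrow> 'a) \<Rightarrow> 'a \<Rightarrow> bool" where
  "regular S mul zero \<longleftrightarrow>
     s_commutative S mul \<and> (\<forall>s\<in>S. mul zero s \<in> S_sub S mul zero zero)"

definition complete_regular :: "'a set \<Rightarrow> ('a \<Rightarrow> 'a \<Rightarrow> 'a) \<Rightarrow> 'a \<Rightarrow> bool" where
  "complete_regular S mul zero \<longleftrightarrow>
     regular S mul zero \<and>
     (\<forall>\<alpha>\<in>S_sub S mul zero zero. \<exists>s\<in>S. mul zero s = \<alpha>)"

end

theory Submission
  imports Defs
begin

text \<open>Wheel distributivity makes left multiplication by any \<open>s\<close> with \<open>s \<cdot> 0 = 0\<close> additive;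
  in particular \<open>0 \<cdot> (-1) = 0\<close>, so \<open>-1 \<in> \<bbbS>\<^sub>0\<close>. S-Associativity with \<open>m = 0\<close> then reads
  \<open>0 \<cdot> (n \<cdot> s) = 0 \<cdot> s - [(-1)(n - 1)] \<cdot> (0 \<cdot> s)\<close> for \<open>n \<in> \<bbbS>\<^sub>0\<close>. Choosing \<open>u\<close> with
  \<open>0 \<cdot> u = e\<close> for the unity \<open>e\<close> and \<open>n = 0\<close> gives \<open>(-1)(-1) = e\<close>, hence \<open>0 \<cdot> (0 \<cdot> s) = 0\<close>:
  every element of \<open>\<Lambda>\<close> lies in \<open>\<bbbS>\<^sub>0\<close>. Conversely, writing \<open>\<alpha> = 1 \<cdot> x\<close> with \<open>x \<in> \<bbbS>\<^sub>0\<close>,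
  the same identity with \<open>n = x\<close>, \<open>s = u\<close> gives \<open>0 \<cdot> (x \<cdot> u) = e - ((-1) \<cdot> x + e) = \<alpha>\<close>.\<close>

locale s_struct =
  fixes S :: "'a set" and add mul :: "'a \<Rightarrow> 'a \<Rightarrow> 'a" and zero one :: 'a
  assumes s_structure: "s_structure S add mul zero one"
begin

abbreviation neg :: "'a \<Rightarrow> 'a" where "neg \<equiv> sneg S add zero"

lemma add_closed: "s \<in> S \<Longrightarrow> t \<in> S \<Longrightarrow> add s t \<in> S"
  and add_assoc: "s \<in> S \<Longrightarrow> t \<in> S \<Longrightarrow> r \<in> S \<Longrightarrow> add (add s t) r = add s (add t r)"
  and add_commute: "s \<in> S \<Longrightarrow> t \<in> S \<Longrightarrow> add s t = add t s"
  and zero_closed: "zero \<in> S"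
  and add_zero_left: "s \<in> S \<Longrightarrow> add zero s = s"
  and add_zero_right: "s \<in> S \<Longrightarrow> add s zero = s"
  and mul_closed: "s \<in> S \<Longrightarrow> t \<in> S \<Longrightarrow> mul s t \<in> S"
  and one_closed: "one \<in> S"
  using s_structure unfolding s_structure_def by auto

lemma neg_unique:
  assumes "s \<in> S" "t \<in> S" "add s t = zero"
  shows "neg s = t"
  unfolding sneg_def
proof (rule the_equality)
  fix t' assume t': "t' \<in> S \<and> add s t' = zero"
  have "t' = add (add t s) t'"
    using assms t' by (simp add: add_commute add_zero_left)
  also have "\<dots> = t"
    using assms t' by (simp add: add_assoc add_zero_right)
  finally show "t' = t" .
qed (use assms in simp)

lemma neg_closed: "s \<in> S \<Longrightarrow> neg s \<in> S"
  and add_neg: "s \<in> S \<Longrightarrow> add s (neg s) = zero"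
proof -
  assume s: "s \<in> S"
  then obtain t where "t \<in> S" "add s t = zero"
    using s_structure unfolding s_structure_def by blast
  with s show "neg s \<in> S" "add s (neg s) = zero"
    using neg_unique by auto
qed

lemma neg_neg: "s \<in> S \<Longrightarrow> neg (neg s) = s"
  by (simp add: neg_unique neg_closed add_neg add_commute)

lemma neg_add:
  assumes "s \<in> S" "t \<in> S"
  shows "neg (add s t) = add (neg s) (neg t)"
proof (rule neg_unique)
  have "add t (add (neg s) (neg t)) = add (neg s) (add t (neg t))"
    using assms add_assoc[of t "neg s" "neg t"] add_assoc[of "neg s" t "neg t"]
      add_commute[of t "neg s"] by (simp add: neg_closed)
  then have "add (add s t) (add (neg s) (neg t)) = add (add s (neg s)) (add t (neg t))"
    using assms by (simp add: add_assoc add_closed neg_closed)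
  then show "add (add s t) (add (neg s) (neg t)) = zero"
    using assms by (simp add: add_neg add_zero_left zero_closed)
qed (use assms in \<open>simp_all add: add_closed neg_closed\<close>)

lemma add_neg_add_neg_cancel:
  assumes "s \<in> S" "t \<in> S"
  shows "add t (neg (add (neg s) t)) = s"
proof -
  have "neg (add (neg s) t) = add (neg t) s"
    using assms by (simp add: neg_add neg_neg neg_closed add_commute)
  then have "add t (neg (add (neg s) t)) = add (add t (neg t)) s"
    using assms by (simp add: add_assoc neg_closed)
  then show ?thesis
    using assms by (simp add: add_neg add_zero_left)
qed

lemma ssub_eq: "ssub S add zero s t = add s (neg t)"
  unfolding ssub_def ..

end

locale comm_wheel_s_struct = s_struct +
  assumes commutative: "s_commutative S mul"
    and wheel: "wheel_distributive S add mul zero"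
begin

abbreviation S0 :: "'a set" where "S0 \<equiv> S_sub S mul zero zero"

lemma mul_commute: "s \<in> S \<Longrightarrow> t \<in> S \<Longrightarrow> mul s t = mul t s"
  using commutative unfolding s_commutative_def by blast

lemma mem_S0_iff: "x \<in> S0 \<longleftrightarrow> x \<in> S \<and> mul zero x = zero"
  unfolding S_sub_def using mul_commute zero_closed by auto

lemma mul_add_right:
  assumes "s \<in> S" "t \<in> S" "r \<in> S" "mul s zero = zero"
  shows "mul s (add t r) = add (mul s t) (mul s r)"
  using wheel assms unfolding wheel_distributive_def
  by (metis add_closed add_zero_right mul_closed)

lemma mul_neg_right:
  assumes "s \<in> S" "t \<in> S" "mul s zero = zero"
  shows "mul s (neg t) = neg (mul s t)"
proof -
  have "add (mul s t) (mul s (neg t)) = mul s (add t (neg t))"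
    using assms by (simp add: mul_add_right neg_closed)
  also have "\<dots> = zero"
    using assms by (simp add: add_neg)
  finally show ?thesis
    using assms by (metis neg_unique mul_closed neg_closed)
qed

lemma neg_mem_S0:
  assumes "zero \<in> S0" "x \<in> S0"
  shows "neg x \<in> S0"
proof -
  have "mul zero zero = zero" "neg zero = zero"
    using assms(1) neg_unique[of zero zero] by (simp_all add: mem_S0_iff add_zero_left)
  then show ?thesis
    using assms(2) mul_neg_right[of zero x] by (simp add: mem_S0_iff neg_closed zero_closed)
qed

lemma neg_one_mul_S0:
  assumes "one \<in> S0" "x \<in> S0"
  shows "mul (neg one) x = neg (mul one x)"
proof -
  have "mul x zero = zero"
    using assms(2) unfolding S_sub_def by simp
  then show ?thesis
    using assms one_closed
    by (simp add: mem_S0_iff mul_commute mul_neg_right neg_closed)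
qed

end

locale unital_s_assoc_struct = comm_wheel_s_struct +
  fixes e :: 'a
  assumes s_associative: "s_associative S add mul zero one"
    and zero_mem_S0: "zero \<in> S0"
    and one_mem_S0: "one \<in> S0"
    and unity: "is_unity S mul zero e"
begin

lemma mul_unity: "s \<in> S \<Longrightarrow> mul e s = s"
  using unity unfolding is_unity_def by blast

lemma unity_closed: "e \<in> S"
  using unity unfolding is_unity_def Lambda_def by blast

lemma zero_mul_unity: "mul zero e = zero"
  using unity zero_closed unfolding is_unity_def by blast

lemma zero_mul_mul_S0:
  assumes "n \<in> S0" "s \<in> S"
  shows "mul zero (mul n s)
    = add (mul zero s) (neg (mul (mul (neg one) (add n (neg one))) (mul zero s)))"
proof -
  have "mul zero n = zero"
    using assms(1) by (simp add: mem_S0_iff)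
  moreover have "ssub S add zero zero one = neg one"
    by (simp add: ssub_eq add_zero_left neg_closed one_closed)
  ultimately show ?thesis
    using s_associative zero_mem_S0 assms unfolding s_associative_def
    by (simp add: ssub_eq)
qed

lemma unity_witness:
  obtains u where "u \<in> S" "mul zero u = e"
  using unity unfolding is_unity_def Lambda_def S_sub_def by blast

lemma neg_one_mul_neg_one: "mul (neg one) (neg one) = e"
proof -
  obtain u where u: "u \<in> S" "mul zero u = e"
    by (rule unity_witness)
  let ?c = "mul (neg one) (neg one)"
  have c: "?c \<in> S"
    by (simp add: mul_closed neg_closed one_closed)
  have "zero = mul zero (mul zero u)"
    using u zero_mul_unity by simp
  also have "\<dots> = add e (neg (mul ?c e))"
    using zero_mul_mul_S0[OF zero_mem_S0 u(1)] u
    by (simp add: add_zero_left neg_closed one_closed)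
  also have "mul ?c e = ?c"
    using c by (simp add: mul_commute unity_closed mul_unity)
  finally have "neg e = neg ?c"
    using c unity_closed by (simp add: neg_unique neg_closed)
  then show ?thesis
    using c unity_closed by (metis neg_neg)
qed

lemma zero_mul_zero_mul: "s \<in> S \<Longrightarrow> mul zero (mul zero s) = zero"
  using zero_mul_mul_S0[OF zero_mem_S0, of s]
  by (simp add: add_zero_left neg_closed one_closed neg_one_mul_neg_one
      mul_unity mul_closed zero_closed add_neg)

lemma zero_mul_mul_unity_witness:
  assumes x: "x \<in> S0" and u: "u \<in> S" "mul zero u = e"
  shows "mul zero (mul x u) = mul one x"
proof -
  let ?\<alpha> = "mul one x"
  have xS: "x \<in> S" and \<alpha>S: "?\<alpha> \<in> S"
    using x by (simp_all add: mem_S0_iff mul_closed one_closed)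
  have "mul (neg one) zero = zero"
    using neg_mem_S0[OF zero_mem_S0 one_mem_S0] unfolding S_sub_def by simp
  then have "mul (neg one) (add x (neg one)) = add (neg ?\<alpha>) e"
    using x xS by (simp add: mul_add_right neg_closed one_closed
        neg_one_mul_S0 one_mem_S0 neg_one_mul_neg_one)
  then have "mul zero (mul x u) = add e (neg (add (neg ?\<alpha>) e))"
    using zero_mul_mul_S0[OF x u(1)] u \<alpha>S
    by (simp add: mul_commute mul_unity unity_closed add_closed neg_closed)
  then show ?thesis
    using \<alpha>S unity_closed by (simp add: add_neg_add_neg_cancel)
qed

lemma zero_mul_mem_S0: "s \<in> S \<Longrightarrow> mul zero s \<in> S0"
  unfolding mem_S0_iff using zero_mul_zero_mul by (simp add: mul_closed zero_closed)

lemma regular: "regular S mul zero"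
  unfolding regular_def using commutative zero_mul_mem_S0 by blast

lemma Lambda_subset_S0: "Lambda S mul zero \<subseteq> S0"
proof
  fix \<alpha> assume "\<alpha> \<in> Lambda S mul zero"
  then obtain s where "s \<in> S" "mul zero s = \<alpha>"
    unfolding Lambda_def S_sub_def by blast
  then show "\<alpha> \<in> S0"
    using zero_mul_mem_S0 by blast
qed

context
  assumes S0_eq: "S0 = {mul one x | x. x \<in> S0}"
begin

lemma zero_mul_onto_S0:
  assumes "\<alpha> \<in> S0"
  shows "\<exists>s\<in>S. mul zero s = \<alpha>"
proof -
  obtain x where x: "x \<in> S0" "\<alpha> = mul one x"
    using assms S0_eq by blast
  obtain u where u: "u \<in> S" "mul zero u = e"
    by (rule unity_witness)
  have "mul x u \<in> S"
    using x u by (simp add: mem_S0_iff mul_closed)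
  with x u show ?thesis
    using zero_mul_mul_unity_witness by blast
qed

lemma Lambda_eq_S0: "Lambda S mul zero = S0"
proof
  show "S0 \<subseteq> Lambda S mul zero"
  proof
    fix \<alpha> assume \<alpha>: "\<alpha> \<in> S0"
    then obtain s where "s \<in> S" "mul zero s = \<alpha>"
      using zero_mul_onto_S0 by blast
    then have "s \<in> S_sub S mul zero \<alpha>"
      unfolding S_sub_def using mul_commute zero_closed by auto
    with \<alpha> show "\<alpha> \<in> Lambda S mul zero"
      unfolding Lambda_def by (auto simp: mem_S0_iff)
  qed
qed (rule Lambda_subset_S0)

lemma complete_regular: "complete_regular S mul zero"
  unfolding complete_regular_def using regular zero_mul_onto_S0 by blast

end

end

theorem theorem3p2p1:
  fixes S :: "'a set" and add mul :: "'a \<Rightarrow> 'a \<Rightarrow> 'a" and zero one :: 'a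
  assumes "s_ring S add mul zero one"
  shows "Lambda S mul zero = S_sub S mul zero zero \<and> complete_regular S mul zero"
proof -
  obtain e where ess: "essential S add mul zero one" and unity: "is_unity S mul zero e"
    using assms unfolding s_ring_def by blast
  interpret unital_s_assoc_struct S add mul zero one e
    using ess unity unfolding essential_def by unfold_locales blast+
  have S0_eq: "S_sub S mul zero zero = {mul one x | x. x \<in> S_sub S mul zero zero}"
    using ess unfolding essential_def by blast
  show ?thesis
    using Lambda_eq_S0[OF S0_eq] complete_regular[OF S0_eq] by (rule conjI)
qed

end
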